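(* Let $x_i$ be a real variable and let $\mathcal{I}_i=\{\langle l^1,u^1\rangle,\dots,\langle l^m,u^m\rangle\}$ be a finite, nonempty set of partitions of its domain, where each partition is an interval with lower end $l^k$ and upper end $u^k$, $l^k<u^k$. Write $\mathbf{x}_i^l=(l^1,\dots,l^m)\in\mathbb{R}^m$, $\mathbf{x}_i^u=(u^1,\dots,u^m)\in\mathbb{R}^m$, and let $\mathbf{1}\in\mathbb{R}^m$ be the all-ones vector. Define the piecewise quadratic relaxation $$\langle x_i\rangle^{MC_q(\mathcal{I})}=\Big\{(x_i,\widehat{x}_i,\widehat{\mathbf{y}}_i)\in\mathbb{R}\times\mathbb{R}\times\{0,1\}^m:\ \widehat{x}_i\geqslant x_i^2,\ \widehat{x}_i\leqslant\big((\mathbf{x}_i^l\cdot\widehat{\mathbf{y}}_i)+(\mathbf{x}_i^u\cdot\widehat{\mathbf{y}}_i)\big)x_i-(\mathbf{x}_i^l\cdot\widehat{\mathbf{y}}_i)(\mathbf{x}_i^u\cdot\widehat{\mathbf{y}}_i),\ \widehat{\mathbf{y}}_i\cdot\mathbf{1}=1\Big\}$$ and the piecewise McCormick relaxation of the product $x_i\cdot x_i$ $$\langle x_i,x_i\rangle^{MC(\mathcal{I})}=\Big\{(x_i,\widehat{x}_i,\widehat{\mathbf{y}}_i)\in\mathbb{R}\times\mathbb{R}\times\{0,1\}^m:\ \widehat{x}_i\geqslant 2(\mathbf{x}_i^l\cdot\widehat{\mathbf{y}}_i)x_i-(\mathbf{x}_i^l\cdot\widehat{\mathbf{y}}_i)^2,\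 \widehat{x}_i\geqslant 2(\mathbf{x}_i^u\cdot\widehat{\mathbf{y}}_i)x_i-(\mathbf{x}_i^u\cdot\widehat{\mathbf{y}}_i)^2,$$ $$\widehat{x}_i\leqslant\big((\mathbf{x}_i^l\cdot\widehat{\mathbf{y}}_i)+(\mathbf{x}_i^u\cdot\widehat{\mathbf{y}}_i)\big)x_i-(\mathbf{x}_i^l\cdot\widehat{\mathbf{y}}_i)(\mathbf{x}_i^u\cdot\widehat{\mathbf{y}}_i),\ \widehat{\mathbf{y}}_i\cdot\mathbf{1}=1\Big\}.$$ Then $\langle x_i\rangle^{MC_q(\mathcal{I})}\subsetneq\langle x_i,x_i\rangle^{MC(\mathcal{I})}$, i.e. the first set is contained in the second and the containment is strict.
   Context: For vectors $\mathbf{a},\mathbf{b}\in\mathbb{R}^m$, $\mathbf{a}\cdot\mathbf{b}=\sum_{k=1}^m a_kb_k$. The binary vector $\widehat{\mathbf{y}}_i$ selects exactly one active partition of $x_i$; $\widehat{x}_i$ is a lifted variable representing $x_i^2$. These sets are the piecewise convex relaxations used for a square term $x_i^2$ (the first) and for the bilinear term $x_ix_j$ specialized to $j=i$ with a common binary selection vector (the second). *)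

theory Defs
  imports "HOL-Analysis.Analysis"
begin

text \<open>Partitions are indexed by a finite (nonempty) type 'm, so that the vectors
  of lower ends l and upper ends u live in R^m. A point of the relaxation is a
  triple (x, xhat, y) with y in {0,1}^m.\<close>

definition ones :: "real ^ 'm" where
  "ones = (\<chi> k. 1)"

definition MCq :: "real ^ 'm \<Rightarrow> real ^ 'm \<Rightarrow> (real \<times> real \<times> (real ^ 'm)) set" where
  "MCq l u = {(x, xh, y::real^'m). (\<forall>k. y $ k \<in> {0, 1}) \<and>
      xh \<ge> x ^ 2 \<and>
      xh \<le> ((l \<bullet> y) + (u \<bullet> y)) * x - (l \<bullet> y) * (u \<bullet> y) \<and>
      y \<bullet> ones = 1}"

definition MC :: "real ^ 'm \<Rightarrow> real ^ 'm \<Rightarrow> (real \<times> real \<times> (real ^ 'm)) set" where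
  "MC l u = {(x, xh, y::real^'m). (\<forall>k. y $ k \<in> {0, 1}) \<and>
      xh \<ge> 2 * (l \<bullet> y) * x - (l \<bullet> y) ^ 2 \<and>
      xh \<ge> 2 * (u \<bullet> y) * x - (u \<bullet> y) ^ 2 \<and>
      xh \<le> ((l \<bullet> y) + (u \<bullet> y)) * x - (l \<bullet> y) * (u \<bullet> y) \<and>
      y \<bullet> ones = 1}"

end

theory Submission
  imports Defs
begin

text \<open>Every inequality of the McCormick relaxation beyond those of the quadratic one is a
  tangent line of the parabola, hence implied by \<open>xh \<ge> x\<^sup>2\<close>. Conversely, at the midpoint
  \<open>x = (a + b)/2\<close> of an active partition \<open>[a, b]\<close> the value \<open>xh = a b\<close> satisfies all McCormick
  inequalities, but lies strictly below \<open>x\<^sup>2\<close> because \<open>x\<^sup>2 - a b = ((b - a)/2)\<^sup>2 > 0\<close>.\<close>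

lemma square_ge_tangent: "2 * a * x - a\<^sup>2 \<le> (x::real)\<^sup>2"
proof -
  have "0 \<le> (x - a)\<^sup>2" by simp
  then show ?thesis by (simp add: power2_eq_square algebra_simps)
qed

lemma MCq_subset_MC: "MCq l u \<subseteq> MC l u"
  unfolding MCq_def MC_def using square_ge_tangent order_trans by fastforce

lemma axis_selection:
  fixes v :: "real ^ 'm"
  shows "\<forall>j. axis k 1 $ j \<in> {0, 1}" and "axis k 1 \<bullet> ones = 1" and "v \<bullet> axis k 1 = v $ k"
proof -
  show "\<forall>j. axis k 1 $ j \<in> {0, 1}" by (simp add: axis_def)
  show "axis k 1 \<bullet> ones = 1" by (simp add: ones_def inner_commute[of "axis k 1"] inner_axis)
  show "v \<bullet> axis k 1 = v $ k" by (simp add: inner_axis)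
qed

lemma midpoint_in_MC_not_MCq:
  fixes l u :: "real ^ 'm"
  assumes "l $ k < u $ k"
  defines "a \<equiv> l $ k" and "b \<equiv> u $ k"
  shows "((a + b) / 2, a * b, axis k 1) \<in> MC l u - MCq l u"
proof -
  let ?x = "(a + b) / 2"
  have "0 \<le> (a - b)\<^sup>2" by simp
  then have upper: "a * b \<le> (a + b) * ?x - a * b"
    by (simp add: power2_eq_square algebra_simps)
  have lower_l: "2 * a * ?x - a\<^sup>2 \<le> a * b" and lower_u: "2 * b * ?x - b\<^sup>2 \<le> a * b"
    by (simp_all add: power2_eq_square algebra_simps)
  have "0 < (b - a)\<^sup>2" using assms by simp
  then have below_square: "a * b < ?x\<^sup>2"
    by (simp add: power2_eq_square algebra_simps)
  show ?thesis
    using axis_selection(1,2)[of k] axis_selection(3)[of l k] axis_selection(3)[of u k] upper lower_l lower_u below_square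
    unfolding MC_def MCq_def a_def b_def by auto
qed

theorem lemma1:
  fixes l u :: "real ^ 'm"
  assumes "\<forall>k. l $ k < u $ k"
  shows "MCq l u \<subset> MC l u"
proof -
  obtain k :: 'm where "l $ k < u $ k" using assms by blast
  then have "MC l u - MCq l u \<noteq> {}" using midpoint_in_MC_not_MCq by blast
  then show ?thesis using MCq_subset_MC by blast
qed

end
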